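(* Let $\ell\in\{-1,1\}^n$, $L=\ell\ell^T$, and $A=\lambda\ell\ell^T/\sqrt n+E$, where $E$ has i.i.d. $N(0,1)$ entries. Let $\kappa$ be a real parameter and $K$ a parameter with $\lambda,K\ge10^2$. Let $\theta=e^{-\lambda^2/2+2K\lambda+3\kappa}$. Then with probability at least $1-e^{-10\kappa}$, for all $x_1,\dots,x_n\in[0,1]$ with $x_1+\dots+x_n\le0.1n$, \[ \langle A\odot L,X\rangle\ge\big(K(x_1+\dots+x_n)-\theta n\big)\sqrt n-10^4\sqrt n\max(0,\kappa-\lambda), \] where $X$ is the $n\times n$ matrix with $X_{ij}=x_i$.
   Context: $\odot$ is the entrywise product and $\langle X,Y\rangle=\sum_{ij}X_{ij}Y_{ij}$. *)

theory Defs
  imports "HOL-Probability.Probability"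
begin

definition gauss_matrix_space :: "nat \<Rightarrow> (nat \<times> nat \<Rightarrow> real) measure" where
  "gauss_matrix_space n = PiM ({..<n} \<times> {..<n}) (\<lambda>_. std_normal_distribution)"

definition frob :: "nat \<Rightarrow> (nat \<Rightarrow> nat \<Rightarrow> real) \<Rightarrow> (nat \<Rightarrow> nat \<Rightarrow> real) \<Rightarrow> real" where
  "frob n X Y = (\<Sum>i<n. \<Sum>j<n. X i j * Y i j)"

definition hadamard :: "(nat \<Rightarrow> nat \<Rightarrow> real) \<Rightarrow> (nat \<Rightarrow> nat \<Rightarrow> real) \<Rightarrow> (nat \<Rightarrow> nat \<Rightarrow> real)" where
  "hadamard X Y = (\<lambda>i j. X i j * Y i j)"

end

theory Submission imports Defs begin

text \<open>Since the entries of L are \<open>\<plusminus>1\<close>, \<open>\<langle>A \<odot> L, X\<rangle> = sqrt n * \<Sum>\<^sub>i x\<^sub>i (\<lambda> + g\<^sub>i)\<close> where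
  \<open>g\<^sub>i = \<Sum>\<^sub>j ell\<^sub>i ell\<^sub>j E\<^sub>i\<^sub>j / sqrt n\<close> are independent standard Gaussians. For \<open>x\<^sub>i \<in> [0,1]\<close>,
  \<open>x\<^sub>i (\<lambda> + g\<^sub>i) \<ge> K x\<^sub>i - max 0 (K - \<lambda> - g\<^sub>i)\<close>, so it suffices that the shortfall
  \<open>H = \<Sum>\<^sub>i max 0 (K - \<lambda> - g\<^sub>i)\<close> stays below \<open>\<theta> n + 10^4 max 0 (\<kappa> - \<lambda>)\<close> outside an
  event of probability \<open>exp (-10 \<kappa>)\<close>.
  Both tail bounds use the Gaussian moment generating function: the expectation of
  \<open>exp (\<lambda> (K - \<lambda> - g\<^sub>i))\<close> is \<open>exp (K \<lambda> - \<lambda>\<^sup>2 / 2) = \<theta> exp (- K \<lambda> - 3 \<kappa>)\<close>: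
  for \<open>\<kappa> < 2 \<lambda>\<close> Markov's inequality with \<open>max 0 u \<le> exp (\<lambda> u) / \<lambda>\<close> suffices, and for
  \<open>\<kappa> \<ge> 2 \<lambda>\<close> a Chernoff bound with \<open>exp (\<lambda> max 0 u) \<le> exp (\<lambda> u) + 1\<close>.\<close>

lemma nn_integral_std_normal_exp:
  "(\<integral>\<^sup>+x. ennreal (exp (a * x)) \<partial>std_normal_distribution) = ennreal (exp (a^2 / 2))"
proof -
  have shift: "std_normal_density x * exp (a * x) = exp (a^2 / 2) * normal_density a 1 x" for x
  proof -
    have "- (x^2) / 2 + a * x = a^2 / 2 + (- ((x - a)^2) / 2)"
      by (simp add: power2_eq_square field_simps)
    then show ?thesis
      unfolding normal_density_def by (simp add: exp_add[symmetric] mult.assoc)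
  qed
  have "(\<integral>\<^sup>+x. ennreal (exp (a * x)) \<partial>std_normal_distribution)
      = (\<integral>\<^sup>+x. ennreal (exp (a^2 / 2)) * ennreal (normal_density a 1 x) \<partial>lborel)"
    by (subst nn_integral_density) (auto simp: ennreal_mult[symmetric] shift)
  also have "\<dots> = ennreal (exp (a^2 / 2)) * (\<integral>\<^sup>+x. ennreal (normal_density a 1 x) \<partial>lborel)"
    by (subst nn_integral_cmult) auto
  also have "(\<integral>\<^sup>+x. ennreal (normal_density a 1 x) \<partial>lborel) = 1"
    by (subst nn_integral_eq_integral) auto
  finally show ?thesis by simp
qed

lemma product_prob_space_std_normal:
  "product_prob_space (\<lambda>_::'i. std_normal_distribution)"
  unfolding product_prob_space_def product_prob_space_axioms_def product_sigma_finite_def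
  using real_dist_normal_dist by (simp add: real_distribution_def prob_space_imp_sigma_finite)

lemma nn_integral_PiM_std_normal_exp_sum:
  fixes I :: "'i set"
  assumes "finite I"
  shows "(\<integral>\<^sup>+E. ennreal (exp (\<Sum>p\<in>I. a p * E p)) \<partial>PiM I (\<lambda>_. std_normal_distribution))
       = ennreal (exp (\<Sum>p\<in>I. (a p)^2 / 2))"
proof -
  interpret product_prob_space "\<lambda>_::'i. std_normal_distribution"
    by (rule product_prob_space_std_normal)
  have "(\<integral>\<^sup>+E. ennreal (exp (\<Sum>p\<in>I. a p * E p)) \<partial>PiM I (\<lambda>_. std_normal_distribution))
      = (\<integral>\<^sup>+E. (\<Prod>p\<in>I. ennreal (exp (a p * E p))) \<partial>PiM I (\<lambda>_. std_normal_distribution))"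
    using assms by (simp add: exp_sum prod_ennreal)
  also have "\<dots> = (\<Prod>p\<in>I. \<integral>\<^sup>+x. ennreal (exp (a p * x)) \<partial>std_normal_distribution)"
    using assms by (intro product_nn_integral_prod) auto
  also have "\<dots> = ennreal (exp (\<Sum>p\<in>I. (a p)^2 / 2))"
    using assms by (simp add: nn_integral_std_normal_exp prod_ennreal exp_sum)
  finally show ?thesis .
qed

lemma prob_space_gauss_matrix_space: "prob_space (gauss_matrix_space n)"
  unfolding gauss_matrix_space_def
  by (rule prob_space_PiM) (use real_dist_normal_dist in \<open>simp add: real_distribution_def\<close>)

definition signed_row_sum :: "nat \<Rightarrow> (nat \<Rightarrow> real) \<Rightarrow> (nat \<times> nat \<Rightarrow> real) \<Rightarrow> nat \<Rightarrow> real" where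
  "signed_row_sum n ell E i = (\<Sum>j<n. ell i * ell j * E (i, j)) / sqrt (real n)"

lemma measurable_signed_row_sum:
  assumes "i < n"
  shows "(\<lambda>E. signed_row_sum n ell E i) \<in> borel_measurable (gauss_matrix_space n)"
proof -
  have "(\<lambda>E. E p) \<in> borel_measurable (gauss_matrix_space n)" if "p \<in> {..<n} \<times> {..<n}" for p
    unfolding gauss_matrix_space_def
    using measurable_component_singleton[OF that, of "\<lambda>_. std_normal_distribution"]
    by (simp cong: measurable_cong_sets)
  then show ?thesis
    unfolding signed_row_sum_def using assms
    by (intro borel_measurable_divide borel_measurable_sum borel_measurable_times
        borel_measurable_const) auto
qed

lemma nn_integral_prod_exp_signed_row_sum:
  assumes n: "n > 0" and ell: "\<forall>i<n. ell i \<in> {-1, 1}" and B: "B \<subseteq> {..<n}"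
  shows "(\<integral>\<^sup>+E. ennreal (\<Prod>i\<in>B. exp (s * (c - signed_row_sum n ell E i))) \<partial>gauss_matrix_space n)
       = ennreal (exp ((s * c + s^2 / 2) * card B))"
proof -
  define I where "I = {..<n} \<times> {..<n}"
  define a where "a p = (if fst p \<in> B then - s * ell (fst p) * ell (snd p) / sqrt n else 0)"
    for p :: "nat \<times> nat"
  have finite_I: "finite I" by (simp add: I_def)
  have finB: "finite B" using B finite_subset by blast
  have sum_I: "(\<Sum>p\<in>I. f p) = (\<Sum>i\<in>B. \<Sum>j<n. f (i, j))"
    if "\<And>p. fst p \<notin> B \<Longrightarrow> f p = 0" for f :: "nat \<times> nat \<Rightarrow> real"
  proof -
    have "(\<Sum>p\<in>I. f p) = (\<Sum>p\<in>B \<times> {..<n}. f p)"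
      using B that by (intro sum.mono_neutral_right) (fastforce simp: I_def)+
    then show ?thesis by (simp add: sum.cartesian_product)
  qed
  have linear: "(\<Sum>p\<in>I. a p * E p) = (\<Sum>i\<in>B. - s * signed_row_sum n ell E i)" for E
    by (subst sum_I) (auto simp: a_def signed_row_sum_def sum_distrib_left sum_divide_distrib mult.assoc)
  have square: "(\<Sum>p\<in>I. (a p)^2 / 2) = card B * (s^2 / 2)"
  proof -
    have "(a (i, j))^2 / 2 = s^2 / (2 * n)" if "i \<in> B" "j < n" for i j
    proof -
      have "(ell i)^2 = 1" "(ell j)^2 = 1" using ell B that by auto
      then show ?thesis using that by (simp add: a_def power_mult_distrib power_divide)
    qed
    then have "(\<Sum>p\<in>I. (a p)^2 / 2) = (\<Sum>i\<in>B. \<Sum>j<n. s^2 / (2 * n))"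
      by (subst sum_I) (auto simp: a_def)
    then show ?thesis using n by simp
  qed
  have split: "(\<Prod>i\<in>B. exp (s * (c - signed_row_sum n ell E i)))
             = exp (s * c * card B) * exp (\<Sum>p\<in>I. a p * E p)" for E
  proof -
    have "(\<Sum>i\<in>B. s * (c - signed_row_sum n ell E i))
        = s * c * card B + (\<Sum>i\<in>B. - s * signed_row_sum n ell E i)"
      by (simp add: sum.distrib right_diff_distrib sum_subtractf sum_negf)
    then show ?thesis
      using finB by (simp add: linear exp_sum[symmetric] exp_add[symmetric])
  qed
  have "(\<integral>\<^sup>+E. ennreal (\<Prod>i\<in>B. exp (s * (c - signed_row_sum n ell E i))) \<partial>gauss_matrix_space n)
      = ennreal (exp (s * c * card B)) *
        (\<integral>\<^sup>+E. ennreal (exp (\<Sum>p\<in>I. a p * E p)) \<partial>PiM I (\<lambda>_. std_normal_distribution))"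
    unfolding split gauss_matrix_space_def I_def
    by (subst nn_integral_cmult[symmetric]) (auto simp: ennreal_mult)
  also have "\<dots> = ennreal (exp ((s * c + s^2 / 2) * card B))"
    unfolding nn_integral_PiM_std_normal_exp_sum[OF finite_I] square
    by (simp add: ennreal_mult[symmetric] exp_add[symmetric] algebra_simps)
  finally show ?thesis .
qed

definition row_shortfall :: "nat \<Rightarrow> (nat \<Rightarrow> real) \<Rightarrow> real \<Rightarrow> (nat \<times> nat \<Rightarrow> real) \<Rightarrow> real" where
  "row_shortfall n ell c E = (\<Sum>i<n. max 0 (c - signed_row_sum n ell E i))"

lemma row_shortfall_nonneg: "row_shortfall n ell c E \<ge> 0"
  by (simp add: row_shortfall_def sum_nonneg)

lemma measurable_row_shortfall:
  "(\<lambda>E. row_shortfall n ell c E) \<in> borel_measurable (gauss_matrix_space n)"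
  unfolding row_shortfall_def
  by (intro borel_measurable_sum borel_measurable_max borel_measurable_const
      borel_measurable_diff measurable_signed_row_sum) auto

lemma max_zero_le_exp_divide:
  assumes "0 < s"
  shows "max 0 u \<le> exp (s * u) / (s::real)"
proof -
  have "s * u \<le> exp (s * u)" using exp_ge_add_one_self[of "s * u"] by linarith
  then show ?thesis using assms by (simp add: field_simps)
qed

lemma exp_mult_max_zero_le: "exp (s * max 0 u) \<le> exp (s * u) + (1::real)"
  by (cases "u \<le> 0") (auto simp: max_def)

lemma nn_integral_row_shortfall_le:
  assumes n: "n > 0" and ell: "\<forall>i<n. ell i \<in> {-1, 1}" and s: "s > 0"
  shows "(\<integral>\<^sup>+E. ennreal (row_shortfall n ell c E) \<partial>gauss_matrix_space n)
       \<le> ennreal (n * exp (s * c + s^2 / 2) / s)"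
proof -
  let ?M = "gauss_matrix_space n"
  let ?f = "\<lambda>i E. ennreal (exp (s * (c - signed_row_sum n ell E i)))"
  have "(\<integral>\<^sup>+E. ennreal (row_shortfall n ell c E) \<partial>?M) \<le> (\<integral>\<^sup>+E. (\<Sum>i<n. ennreal (1 / s) * ?f i E) \<partial>?M)"
  proof (rule nn_integral_mono)
    fix E
    have "row_shortfall n ell c E \<le> (\<Sum>i<n. 1 / s * exp (s * (c - signed_row_sum n ell E i)))"
      unfolding row_shortfall_def
      by (intro sum_mono) (use max_zero_le_exp_divide[OF s] in simp)
    then show "ennreal (row_shortfall n ell c E) \<le> (\<Sum>i<n. ennreal (1 / s) * ?f i E)"
      using s by (simp add: ennreal_leI sum_ennreal ennreal_mult[symmetric])
  qed
  also have "\<dots> = (\<Sum>i<n. ennreal (1 / s) * (\<integral>\<^sup>+E. ?f i E \<partial>?M))"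
  proof -
    have [measurable]: "(\<lambda>E. signed_row_sum n ell E i) \<in> borel_measurable ?M" if "i < n" for i
      using that by (rule measurable_signed_row_sum)
    show ?thesis
      by (subst nn_integral_sum) (auto intro!: sum.cong nn_integral_cmult)
  qed
  also have "\<dots> = (\<Sum>i<n. ennreal (1 / s) * ennreal (exp (s * c + s^2 / 2)))"
    using nn_integral_prod_exp_signed_row_sum[OF n ell, of "{_}" s c] by simp
  also have "\<dots> = ennreal (n * exp (s * c + s^2 / 2) / s)"
    using s by (simp add: ennreal_mult[symmetric] ennreal_of_nat_eq_real_of_nat)
  finally show ?thesis .
qed

lemma nn_integral_exp_row_shortfall_le:
  assumes n: "n > 0" and ell: "\<forall>i<n. ell i \<in> {-1, 1}"
  shows "(\<integral>\<^sup>+E. ennreal (exp (s * row_shortfall n ell c E)) \<partial>gauss_matrix_space n)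
       \<le> ennreal (exp (n * exp (s * c + s^2 / 2)))"
proof -
  let ?M = "gauss_matrix_space n"
  let ?f = "\<lambda>i E. exp (s * (c - signed_row_sum n ell E i))"
  define q where "q = s * c + s^2 / 2"
  have "(\<integral>\<^sup>+E. ennreal (exp (s * row_shortfall n ell c E)) \<partial>?M)
      \<le> (\<integral>\<^sup>+E. (\<Sum>B\<in>Pow {..<n}. ennreal (\<Prod>i\<in>B. ?f i E)) \<partial>?M)"
  proof (rule nn_integral_mono)
    fix E
    have "exp (s * row_shortfall n ell c E)
        = (\<Prod>i<n. exp (s * max 0 (c - signed_row_sum n ell E i)))"
      unfolding row_shortfall_def by (simp add: sum_distrib_left exp_sum)
    also have "\<dots> \<le> (\<Prod>i<n. ?f i E + 1)"
      by (intro prod_mono) (simp add: exp_mult_max_zero_le)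
    also have "\<dots> = (\<Sum>B\<in>Pow {..<n}. \<Prod>i\<in>B. ?f i E)"
      by (subst prod_add) auto
    finally show "ennreal (exp (s * row_shortfall n ell c E)) \<le> (\<Sum>B\<in>Pow {..<n}. ennreal (\<Prod>i\<in>B. ?f i E))"
      by (simp add: ennreal_leI sum_ennreal prod_nonneg)
  qed
  also have "\<dots> = (\<Sum>B\<in>Pow {..<n}. ennreal (exp q ^ card B))"
  proof -
    have "(\<lambda>E. \<Prod>i\<in>B. ?f i E) \<in> borel_measurable ?M" if "B \<in> Pow {..<n}" for B
      using that measurable_signed_row_sum by (intro borel_measurable_prod) auto
    then have "(\<integral>\<^sup>+E. (\<Sum>B\<in>Pow {..<n}. ennreal (\<Prod>i\<in>B. ?f i E)) \<partial>?M)
        = (\<Sum>B\<in>Pow {..<n}. \<integral>\<^sup>+E. ennreal (\<Prod>i\<in>B. ?f i E) \<partial>?M)"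
      by (intro nn_integral_sum) auto
    also have "\<dots> = (\<Sum>B\<in>Pow {..<n}. ennreal (exp q ^ card B))"
      by (intro sum.cong refl)
        (simp add: nn_integral_prod_exp_signed_row_sum[OF n ell] q_def exp_of_nat_mult[symmetric]
          mult.commute)
    finally show ?thesis .
  qed
  also have "\<dots> = ennreal ((exp q + 1) ^ n)"
  proof -
    have "(exp q + 1) ^ n = (\<Prod>i<n. exp q + 1)" by simp
    also have "\<dots> = (\<Sum>B\<in>Pow {..<n}. exp q ^ card B)" by (subst prod_add) auto
    finally show ?thesis by (simp add: sum_ennreal)
  qed
  also have "\<dots> \<le> ennreal (exp (n * exp q))"
  proof (rule ennreal_leI)
    have "(exp q + 1) ^ n \<le> exp (exp q) ^ n"
      by (intro power_mono) (auto simp: exp_ge_add_one_self add.commute)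
    then show "(exp q + 1) ^ n \<le> exp (n * exp q)"
      by (simp add: exp_of_nat_mult)
  qed
  finally show ?thesis unfolding q_def .
qed

lemma emeasure_row_shortfall_ge_Markov:
  assumes n: "n > 0" and ell: "\<forall>i<n. ell i \<in> {-1, 1}" and s: "s > 0" and t: "t > 0"
  shows "emeasure (gauss_matrix_space n) {E \<in> space (gauss_matrix_space n). t \<le> row_shortfall n ell c E}
       \<le> ennreal (n * exp (s * c + s^2 / 2) / (s * t))"
proof -
  let ?M = "gauss_matrix_space n" and ?H = "row_shortfall n ell c"
  note measurable_row_shortfall[measurable]
  have "{E \<in> space ?M. t \<le> ?H E} = {E \<in> space ?M. 1 \<le> ennreal (1 / t) * ennreal (?H E)}"
    using t row_shortfall_nonneg[of n ell c]
    by (auto simp: ennreal_mult[symmetric] ennreal_1[symmetric] field_simps simp del: ennreal_1)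
  also have "emeasure ?M \<dots> \<le> ennreal (1 / t) * (\<integral>\<^sup>+E. ennreal (?H E) * indicator (space ?M) E \<partial>?M)"
    by (rule nn_integral_Markov_inequality) auto
  also have "(\<integral>\<^sup>+E. ennreal (?H E) * indicator (space ?M) E \<partial>?M) = (\<integral>\<^sup>+E. ennreal (?H E) \<partial>?M)"
    by (intro nn_integral_cong) simp
  also have "ennreal (1 / t) * \<dots> \<le> ennreal (1 / t) * ennreal (n * exp (s * c + s^2 / 2) / s)"
    by (intro mult_left_mono nn_integral_row_shortfall_le[OF n ell s]) auto
  also have "\<dots> = ennreal (n * exp (s * c + s^2 / 2) / (s * t))"
    using s t by (simp add: ennreal_mult[symmetric])
  finally show ?thesis .
qed

lemma emeasure_row_shortfall_ge_Chernoff: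
  assumes n: "n > 0" and ell: "\<forall>i<n. ell i \<in> {-1, 1}" and s: "s > 0"
  shows "emeasure (gauss_matrix_space n) {E \<in> space (gauss_matrix_space n). t \<le> row_shortfall n ell c E}
       \<le> ennreal (exp (n * exp (s * c + s^2 / 2) - s * t))"
proof -
  let ?M = "gauss_matrix_space n" and ?H = "row_shortfall n ell c"
  note measurable_row_shortfall[measurable]
  have "emeasure ?M {E \<in> space ?M. t \<le> ?H E}
      \<le> ennreal (exp (- s * t)) * (\<integral>\<^sup>+E. ennreal (exp (s * ?H E)) * indicator (space ?M) E \<partial>?M)"
    using s by (intro Chernoff_ineq_nn_integral_ge) auto
  also have "(\<integral>\<^sup>+E. ennreal (exp (s * ?H E)) * indicator (space ?M) E \<partial>?M)
           = (\<integral>\<^sup>+E. ennreal (exp (s * ?H E)) \<partial>?M)"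
    by (intro nn_integral_cong) simp
  also have "ennreal (exp (- s * t)) * \<dots> \<le> ennreal (exp (- s * t)) * ennreal (exp (n * exp (s * c + s^2 / 2)))"
    by (intro mult_left_mono nn_integral_exp_row_shortfall_le[OF n ell]) auto
  also have "\<dots> = ennreal (exp (n * exp (s * c + s^2 / 2) - s * t))"
    by (simp add: ennreal_mult[symmetric] exp_add[symmetric])
  finally show ?thesis .
qed

lemma emeasure_row_shortfall_ge_threshold:
  assumes n: "n > 0" and ell: "\<forall>i<n. ell i \<in> {-1, 1}"
    and lam: "lam \<ge> 100" and K: "K \<ge> 100" and \<kappa>: "\<kappa> > 0"
  defines "T \<equiv> exp (- (lam^2) / 2 + 2 * K * lam + 3 * \<kappa>) * n + 10^4 * max 0 (\<kappa> - lam)"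
  shows "emeasure (gauss_matrix_space n)
           {E \<in> space (gauss_matrix_space n). T \<le> row_shortfall n ell (K - lam) E}
       \<le> ennreal (exp (- 10 * \<kappa>))"
proof -
  define \<theta> where "\<theta> = exp (- (lam^2) / 2 + 2 * K * lam + 3 * \<kappa>)"
  define q where "q = lam * (K - lam) + lam^2 / 2"
  have \<theta>_eq: "\<theta> = exp q * exp (K * lam + 3 * \<kappa>)"
    unfolding \<theta>_def q_def by (simp add: exp_add[symmetric] power2_eq_square algebra_simps)
  have Klam: "K * lam \<ge> 100 * lam" using K lam by (intro mult_right_mono) auto
  have "exp q \<le> \<theta>" unfolding \<theta>_eq using Klam \<kappa> lam by simp
  have "\<theta> > 0" by (simp add: \<theta>_def)
  have "\<theta> * n \<le> T" by (simp add: T_def \<theta>_def)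
  have "T > 0" using \<open>\<theta> > 0\<close> n by (simp add: T_def \<theta>_def[symmetric] add_pos_nonneg)
  consider (moderate) "\<kappa> < 2 * lam" | (large) "2 * lam \<le> \<kappa>" by linarith
  then show ?thesis
  proof cases
    case moderate
    have "n * exp q / (lam * T) \<le> n * exp q / (lam * (\<theta> * n))"
      using \<open>\<theta> * n \<le> T\<close> \<open>\<theta> > 0\<close> \<open>T > 0\<close> n lam
      by (intro divide_left_mono mult_left_mono) auto
    also have "\<dots> = exp q / \<theta> / lam" using n by (simp add: field_simps)
    also have "\<dots> \<le> exp q / \<theta>" using lam \<open>\<theta> > 0\<close> by (simp add: divide_le_eq)
    also have "\<dots> = inverse (exp (K * lam + 3 * \<kappa>))"
      by (simp add: \<theta>_eq exp_minus_inverse[symmetric] divide_inverse)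
    also have "\<dots> \<le> exp (- 10 * \<kappa>)"
    proof -
      have "7 * \<kappa> \<le> K * lam" using moderate Klam lam by linarith
      then show ?thesis by (simp add: exp_minus[symmetric])
    qed
    finally show ?thesis
      using emeasure_row_shortfall_ge_Markov[OF n ell _ \<open>T > 0\<close>, of lam "K - lam"] lam
      by (auto simp: q_def elim!: order_trans intro!: ennreal_leI)
  next
    case large
    have "n * exp q \<le> \<theta> * n"
      using mult_left_mono[OF \<open>exp q \<le> \<theta>\<close>, of "real n"] by (simp add: mult.commute)
    also have "\<dots> \<le> lam * (\<theta> * n)"
      using \<open>\<theta> > 0\<close> lam mult_right_mono[of 1 lam "\<theta> * n"] by simp
    finally have "n * exp q \<le> lam * (\<theta> * n)" .
    moreover have "lam * (10000 * (\<kappa> - lam)) \<ge> 100 * (10000 * (\<kappa> - lam))"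
      using lam large by (intro mult_right_mono) auto
    moreover have "lam * T = lam * (\<theta> * n) + lam * (10000 * (\<kappa> - lam))"
      using large lam by (simp add: T_def \<theta>_def distrib_left)
    ultimately have "n * exp q - lam * T \<le> - 10 * \<kappa>"
      using large \<kappa> by (smt (verit))
    then show ?thesis
      using emeasure_row_shortfall_ge_Chernoff[OF n ell, of lam T "K - lam"] lam
      by (auto simp: q_def elim!: order_trans intro!: ennreal_leI)
  qed
qed

lemma frob_hadamard_spiked_matrix:
  assumes ell: "\<forall>i<n. ell i \<in> {-1, 1}"
  shows "frob n (hadamard (\<lambda>i j. lam * (ell i * ell j) / sqrt n + E (i, j)) (\<lambda>i j. ell i * ell j))
           (\<lambda>i j. x i)
       = sqrt n * (\<Sum>i<n. x i * (lam + signed_row_sum n ell E i))"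
proof -
  have row: "(\<Sum>j<n. (lam * (ell i * ell j) / sqrt n + E (i, j)) * (ell i * ell j) * x i)
           = sqrt n * (x i * (lam + signed_row_sum n ell E i))" if "i < n" for i
  proof -
    have "sqrt n > 0" using that by simp
    have "(\<Sum>j<n. (lam * (ell i * ell j) / sqrt n + E (i, j)) * (ell i * ell j) * x i)
        = (\<Sum>j<n. x i * (lam / sqrt n) + x i * (ell i * ell j * E (i, j)))"
    proof (rule sum.cong)
      fix j assume "j \<in> {..<n}"
      then have "ell i \<in> {-1, 1}" "ell j \<in> {-1, 1}" using ell that by auto
      then have "(ell i * ell j) * (ell i * ell j) = 1" by auto
      then show "(lam * (ell i * ell j) / sqrt n + E (i, j)) * (ell i * ell j) * x i
               = x i * (lam / sqrt n) + x i * (ell i * ell j * E (i, j))"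
        by (simp add: algebra_simps)
    qed simp
    also have "\<dots> = x i * (n * (lam / sqrt n)) + x i * (\<Sum>j<n. ell i * ell j * E (i, j))"
      by (simp add: sum.distrib sum_distrib_left)
    also have "(\<Sum>j<n. ell i * ell j * E (i, j)) = sqrt n * signed_row_sum n ell E i"
      using \<open>sqrt n > 0\<close> by (simp add: signed_row_sum_def)
    also have "n * (lam / sqrt n) = sqrt n * lam"
      using \<open>sqrt n > 0\<close> by (simp add: field_simps)
    finally show ?thesis by (simp add: algebra_simps)
  qed
  show ?thesis
    unfolding frob_def hadamard_def by (simp add: sum_distrib_left row)
qed

lemma neg_max_zero_le_mult:
  assumes "0 \<le> x" "x \<le> (1::real)"
  shows "- max 0 u \<le> x * (- u)"
  using assms mult_left_le_one_le[of "-u" x] mult_nonneg_nonpos[of x u]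
  by (cases "u \<le> 0") (auto simp: max_def)

lemma sum_mult_signed_row_sum_ge_shortfall:
  assumes "\<forall>i<n. 0 \<le> x i \<and> x i \<le> 1"
  shows "K * (\<Sum>i<n. x i) - row_shortfall n ell (K - lam) E
       \<le> (\<Sum>i<n. x i * (lam + signed_row_sum n ell E i))"
proof -
  have "- row_shortfall n ell (K - lam) E
      \<le> (\<Sum>i<n. x i * (- ((K - lam) - signed_row_sum n ell E i)))"
    unfolding row_shortfall_def sum_negf[symmetric]
    using assms by (intro sum_mono neg_max_zero_le_mult) auto
  then show ?thesis
    by (simp add: sum_distrib_left sum_subtractf sum.distrib algebra_simps)
qed

lemma prob_row_shortfall_le_threshold:
  fixes \<kappa> :: real
  assumes ell: "\<forall>i<n. ell i \<in> {-1, 1}" and lam: "lam \<ge> 100" and K: "K \<ge> 100"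
  defines "M \<equiv> gauss_matrix_space n"
    and "T \<equiv> exp (- (lam^2) / 2 + 2 * K * lam + 3 * \<kappa>) * n + 10^4 * max 0 (\<kappa> - lam)"
  shows "measure M {E \<in> space M. row_shortfall n ell (K - lam) E \<le> T} \<ge> 1 - exp (- 10 * \<kappa>)"
proof -
  interpret prob_space M unfolding M_def by (rule prob_space_gauss_matrix_space)
  let ?S = "{E \<in> space M. row_shortfall n ell (K - lam) E \<le> T}"
  have [measurable]: "row_shortfall n ell (K - lam) \<in> borel_measurable M"
    using measurable_row_shortfall unfolding M_def by simp
  consider (vacuous) "\<kappa> \<le> 0" | (empty) "n = 0" | (generic) "\<kappa> > 0" "n > 0" by linarith
  then show ?thesis
  proof cases
    case vacuous
    then have "1 - exp (- 10 * \<kappa>) \<le> 0" by simp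
    then show ?thesis by (meson measure_nonneg order_trans)
  next
    case empty
    then have "?S = space M" by (simp add: row_shortfall_def T_def)
    then show ?thesis by (simp add: prob_space)
  next
    case generic
    have "emeasure M (space M - ?S) \<le> emeasure M {E \<in> space M. T \<le> row_shortfall n ell (K - lam) E}"
      by (intro emeasure_mono) (auto, measurable)
    also have "\<dots> \<le> ennreal (exp (- 10 * \<kappa>))"
      unfolding M_def T_def using generic ell lam K by (intro emeasure_row_shortfall_ge_threshold) auto
    finally have "measure M (space M - ?S) \<le> exp (- 10 * \<kappa>)"
      by (simp add: emeasure_eq_measure)
    then show ?thesis using prob_compl[of ?S] by simp
  qed
qed

theorem mainTheorem15:
  fixes n :: nat and ell :: "nat \<Rightarrow> real" and lam K \<kappa> :: real
  assumes hl: "\<forall>i<n. ell i \<in> {-1, 1}"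
    and hlam: "lam \<ge> 10^2" and hK: "K \<ge> 10^2"
  shows "let L = (\<lambda>i j. ell i * ell j);
             \<theta> = exp (- (lam^2) / 2 + 2 * K * lam + 3 * \<kappa>);
             M = gauss_matrix_space n
         in \<exists>S \<in> sets M. measure M S \<ge> 1 - exp (- 10 * \<kappa>) \<and>
              (\<forall>E \<in> S. \<forall>x :: nat \<Rightarrow> real.
                 (\<forall>i<n. 0 \<le> x i \<and> x i \<le> 1) \<and> (\<Sum>i<n. x i) \<le> 0.1 * real n \<longrightarrow>
                 (let A = (\<lambda>i j. lam * L i j / sqrt (real n) + E (i, j));
                      X = (\<lambda>i j. x i)
                  in frob n (hadamard A L) X \<ge>
                       (K * (\<Sum>i<n. x i) - \<theta> * real n) * sqrt (real n)
                       - 10^4 * sqrt (real n) * max 0 (\<kappa> - lam)))"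
proof -
  define \<theta> where "\<theta> = exp (- (lam^2) / 2 + 2 * K * lam + 3 * \<kappa>)"
  define T where "T = \<theta> * n + 10^4 * max 0 (\<kappa> - lam)"
  define S where "S = {E \<in> space (gauss_matrix_space n). row_shortfall n ell (K - lam) E \<le> T}"
  have "S \<in> sets (gauss_matrix_space n)"
    unfolding S_def using measurable_row_shortfall[of n ell "K - lam"] by measurable
  moreover have "measure (gauss_matrix_space n) S \<ge> 1 - exp (- 10 * \<kappa>)"
    unfolding S_def T_def \<theta>_def using prob_row_shortfall_le_threshold[OF hl] hlam hK by simp
  moreover have "(K * (\<Sum>i<n. x i) - \<theta> * n) * sqrt n - 10^4 * sqrt n * max 0 (\<kappa> - lam)
      \<le> frob n (hadamard (\<lambda>i j. lam * (ell i * ell j) / sqrt n + E (i, j)) (\<lambda>i j. ell i * ell j))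
           (\<lambda>i j. x i)"
    if "E \<in> S" and "\<forall>i<n. 0 \<le> x i \<and> x i \<le> 1" for E x
  proof -
    have "K * (\<Sum>i<n. x i) - T \<le> (\<Sum>i<n. x i * (lam + signed_row_sum n ell E i))"
      using sum_mult_signed_row_sum_ge_shortfall[OF that(2), of K ell lam E] that(1) by (simp add: S_def)
    then have "sqrt n * (K * (\<Sum>i<n. x i) - T) \<le> sqrt n * (\<Sum>i<n. x i * (lam + signed_row_sum n ell E i))"
      by (intro mult_left_mono) auto
    then show ?thesis
      unfolding frob_hadamard_spiked_matrix[OF hl] T_def by (simp add: algebra_simps)
  qed
  ultimately show ?thesis
    unfolding Let_def \<theta>_def[symmetric] by blast
qed

end
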